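(* Let $m_1\le m_2\le\dots\le m_k$ be nonnegative integers, $n=\sum_r m_r$, and $T_1,\dots,T_n\in\{H,L\}$ with $0\le H<L$. Let $q^{(t)}_r$ be the capacity variables computed by Algorithm 1 on this input, with $q^{(t)}_0:=0$. For a look-ahead setup $(r,h)$ with $1\le r\le h\le k$ and a task index $t$, define $Z^{(r,h,t)}_L=\sum_{i=1}^{h-1}\min\{q^{(t)}_i,q^{(t)}_{r-1}\}$ and $Z^{(r,h,t)}_H=\sum_{i=r}^{h}(q^{(t)}_i-q^{(t)}_{r-1})$ (the L-zone and H-zone sizes when the algorithm allocates task $t$ under setup $(r,h)$). Then for all $1\le i<j\le n$, $$Z^{(r,h,i)}_H+Z^{(r,h,i)}_L+i-1\;\le\;Z^{(r,h,j)}_H+Z^{(r,h,j)}_L+j-1.$$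
   Context: Algorithm 1 (simulation-based threshold algorithm). Input: integers $0\le m_1\le\dots\le m_k$ and a sequence $T_1,\dots,T_n$ with $n=\sum_r m_r$. Set $q^{(1)}_r=m_r$ for all $r$. For $t=1,\dots,n$: set $x_t=\mathrm{TA}(q^{(t)}_1,\dots,q^{(t)}_k;\,T_t,T_{t+1},\dots,T_n)$ and $q^{(t+1)}_r=q^{(t)}_r-\mathbf{1}(x_t=r)$ for each $r$. Output $\mathbf{x}=(x_1,\dots,x_n)$. Subroutine $\mathrm{TA}(m_1,\dots,m_k;\,S_1,\dots,S_N)$ (ThresholdAllocation), with the convention $m_0:=0$: for $\gamma=k,k-1,\dots,1$: if $m_\gamma=m_{\gamma-1}$, go to the next $\gamma$; otherwise, for $h=\gamma,\gamma+1,\dots,k$: let $Z_L=\sum_{i=1}^{h-1}\min\{m_i,m_{\gamma-1}\}$ and $Z_H=\sum_{i=\gamma}^{h}(m_i-m_{\gamma-1})$; if $|\{i\in\{1,\dots,Z_L+Z_H\}: S_i>S_1\}|\ge Z_L$, return $\gamma$ (agent to which $S_1$ is assigned). *)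

theory Defs
  imports Complex_Main
begin

text \<open>Capacities are functions nat => nat indexed by agents 1..k; the convention
  m_0 := 0 is enforced by capz.\<close>

definition capz :: "(nat \<Rightarrow> nat) \<Rightarrow> nat \<Rightarrow> int" where
  "capz m i = (if i = 0 then 0 else int (m i))"

definition zoneL :: "(nat \<Rightarrow> nat) \<Rightarrow> nat \<Rightarrow> nat \<Rightarrow> int" where
  "zoneL m g h = (\<Sum>i\<in>{1..<h}. min (capz m i) (capz m (g - 1)))"

definition zoneH :: "(nat \<Rightarrow> nat) \<Rightarrow> nat \<Rightarrow> nat \<Rightarrow> int" where
  "zoneH m g h = (\<Sum>i\<in>{g..h}. capz m i - capz m (g - 1))"

text \<open>Test inside ThresholdAllocation; the sequence S is indexed from 1 (S 1 is the current task).\<close>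
definition ta_cond :: "(nat \<Rightarrow> nat) \<Rightarrow> (nat \<Rightarrow> real) \<Rightarrow> nat \<Rightarrow> nat \<Rightarrow> bool" where
  "ta_cond m S g h =
     (int (card {i \<in> {1..nat (zoneL m g h + zoneH m g h)}. S i > S 1}) \<ge> zoneL m g h)"

definition TA :: "nat \<Rightarrow> (nat \<Rightarrow> nat) \<Rightarrow> (nat \<Rightarrow> real) \<Rightarrow> nat" where
  "TA k m S = (case find (\<lambda>g. capz m g \<noteq> capz m (g - 1) \<and> (\<exists>h\<in>{g..k}. ta_cond m S g h))
                          (rev [1..<Suc k]) of Some g \<Rightarrow> g | None \<Rightarrow> 0)"

text \<open>Algorithm 1: alg_q k m T s is the capacity vector q^(s+1); alg_x k m T t is x_t.\<close>
primrec alg_q :: "nat \<Rightarrow> (nat \<Rightarrow> nat) \<Rightarrow> (nat \<Rightarrow> real) \<Rightarrow> nat \<Rightarrow> (nat \<Rightarrow> nat)" where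
  "alg_q k m T 0 = m"
| "alg_q k m T (Suc s) =
     (let q = alg_q k m T s; x = TA k q (\<lambda>i. T (Suc s + i - 1))
      in (\<lambda>r. q r - (if x = r then 1 else 0)))"

definition qcap :: "nat \<Rightarrow> (nat \<Rightarrow> nat) \<Rightarrow> (nat \<Rightarrow> real) \<Rightarrow> nat \<Rightarrow> nat \<Rightarrow> nat" where
  "qcap k m T t = alg_q k m T (t - 1)"

definition alg_x :: "nat \<Rightarrow> (nat \<Rightarrow> nat) \<Rightarrow> (nat \<Rightarrow> real) \<Rightarrow> nat \<Rightarrow> nat" where
  "alg_x k m T t = TA k (qcap k m T t) (\<lambda>i. T (t + i - 1))"

end

theory Submission
  imports Defs
begin

(* Lemma 4 says that the quantity  Z_H + Z_L + t  (for a fixed look-ahead setup (r,h))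
   never decreases along the run of Algorithm 1.  Each step of the algorithm either
   leaves the capacities unchanged (TA returns 0) or decrements the capacity of an
   agent x at which the capacity profile strictly rises, q_(x-1) < q_x.  The profile
   q_0 = 0 <= q_1 <= ... <= q_k stays sorted under such decrements, and a single such
   decrement lowers Z_H + Z_L by at most one:
     - if x is not the threshold agent r-1, the threshold value q_(r-1) is unchanged
       and only one summand of Z_L (when x < r) or of Z_H (when x >= r) can drop;
     - if x = r-1, Z_H gains h-r+1 while each of the h-r+1 summands of Z_L with
       index >= r-1 loses at most one.
   So  Z_H + Z_L + t  is a nondecreasing potential, which is the theorem. *)

definition dec :: "(nat \<Rightarrow> nat) \<Rightarrow> nat \<Rightarrow> (nat \<Rightarrow> nat)" where
  "dec q x = (\<lambda>i. q i - (if x = i then 1 else 0))"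

definition cap_mono :: "nat \<Rightarrow> (nat \<Rightarrow> nat) \<Rightarrow> bool" where
  "cap_mono k q \<longleftrightarrow> (\<forall>a b. a \<le> b \<longrightarrow> b \<le> k \<longrightarrow> capz q a \<le> capz q b)"

lemma cap_monoD: "cap_mono k q \<Longrightarrow> a \<le> b \<Longrightarrow> b \<le> k \<Longrightarrow> capz q a \<le> capz q b"
  by (simp add: cap_mono_def)

definition rise :: "nat \<Rightarrow> (nat \<Rightarrow> nat) \<Rightarrow> nat \<Rightarrow> bool" where
  "rise k q x \<longleftrightarrow> 1 \<le> x \<and> x \<le> k \<and> capz q (x - 1) < capz q x"

lemma sum_le_plus_one_pointwise:
  fixes f g :: "nat \<Rightarrow> int"
  assumes "finite A" "\<And>i. i \<in> A \<Longrightarrow> i \<noteq> x \<Longrightarrow> g i \<le> f i" "g x \<le> f x + 1"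
  shows "sum g A \<le> sum f A + 1"
proof -
  have "sum g A \<le> (\<Sum>i\<in>A. f i + (if i = x then 1 else 0))"
    by (rule sum_mono) (use assms in auto)
  also have "\<dots> = sum f A + (if x \<in> A then 1 else 0)"
    using assms(1) by (simp add: sum.distrib)
  finally show ?thesis by (auto split: if_splits)
qed

lemma capz_nonneg: "0 \<le> capz q i"
  by (simp add: capz_def)

lemma capz_dec:
  assumes "rise k q x"
  shows "capz (dec q x) i = capz q i - (if i = x then 1 else 0)"
proof -
  have "q x \<ge> 1"
    using assms capz_nonneg[of q "x - 1"] by (auto simp: rise_def capz_def)
  then show ?thesis
    using assms by (auto simp: rise_def capz_def dec_def)
qed

lemma capz_dec_zero: "capz (dec q 0) = capz q"
  by (auto simp: capz_def dec_def)

lemma zones_capz_cong: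
  assumes "capz q' = capz q"
  shows "zoneH q' r h = zoneH q r h" "zoneL q' r h = zoneL q r h"
  unfolding zoneH_def zoneL_def using assms by simp_all

lemma cap_mono_dec:
  assumes mono: "cap_mono k q" and x: "rise k q x"
  shows "cap_mono k (dec q x)"
  unfolding cap_mono_def capz_dec[OF x]
proof (intro allI impI)
  fix a b :: nat assume ab: "a \<le> b" "b \<le> k"
  have "capz q a \<le> capz q b" using cap_monoD[OF mono ab] .
  moreover have "capz q a \<le> capz q (x - 1)" if "b = x" "a < x"
    using cap_monoD[OF mono, of a "x - 1"] that ab by simp
  ultimately show "capz q a - (if a = x then 1 else 0) \<le> capz q b - (if b = x then 1 else 0)"
    using x ab by (cases "b = x"; cases "a = x") (auto simp: rise_def)
qed

(* Decrement away from the threshold agent r-1: only one summand can drop. *)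
lemma zones_dec_off_threshold:
  assumes mono: "cap_mono k q" and x: "rise k q x" and xr: "x \<noteq> r - 1"
    and rh: "1 \<le> r" "r \<le> h" "h \<le> k"
  shows "zoneH q r h + zoneL q r h \<le> zoneH (dec q x) r h + zoneL (dec q x) r h + 1"
proof -
  note c' = capz_dec[OF x]
  have threshold: "capz (dec q x) (r - 1) = capz q (r - 1)"
    using xr c' by simp
  show ?thesis
  proof (cases "x < r")
    case True
    have "zoneH (dec q x) r h = zoneH q r h"
      unfolding zoneH_def threshold by (rule sum.cong) (use True c' in auto)
    moreover have "zoneL q r h \<le> zoneL (dec q x) r h + 1"
      unfolding zoneL_def threshold
      by (rule sum_le_plus_one_pointwise[where x = x]) (use c' in auto)
    ultimately show ?thesis by simp
  next
    case False
    (* the agent x lies above the threshold, so its Z_L summand is capped anyway *)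
    have "capz q (r - 1) \<le> capz q (x - 1)"
      using False x by (intro cap_monoD[OF mono]) (auto simp: rise_def)
    then have above: "capz q (r - 1) < capz q x"
      using x by (simp add: rise_def)
    have "zoneL (dec q x) r h = zoneL q r h"
      unfolding zoneL_def threshold by (rule sum.cong) (use above c' in auto)
    moreover have "zoneH q r h \<le> zoneH (dec q x) r h + 1"
      unfolding zoneH_def threshold
      by (rule sum_le_plus_one_pointwise[where x = x]) (use c' in auto)
    ultimately show ?thesis by simp
  qed
qed

(* Decrement at the threshold agent r-1: Z_H gains h-r+1, Z_L loses at most h-r+1. *)
lemma zones_dec_at_threshold:
  assumes mono: "cap_mono k q" and x: "rise k q x" and xr: "x = r - 1"
    and rh: "r \<le> h"
  shows "zoneH q r h + zoneL q r h \<le> zoneH (dec q x) r h + zoneL (dec q x) r h"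
proof -
  note c' = capz_dec[OF x]
  have r2: "2 \<le> r" using x unfolding xr rise_def by linarith
  define \<theta> where "\<theta> = capz q (r - 1)"
  have threshold: "capz (dec q x) (r - 1) = \<theta> - 1"
    using xr c' by (simp add: \<theta>_def)
  have gainH: "zoneH (dec q x) r h = zoneH q r h + int (h + 1 - r)"
  proof -
    have "zoneH (dec q x) r h = (\<Sum>i\<in>{r..h}. (capz q i - \<theta>) + 1)"
      unfolding zoneH_def threshold by (rule sum.cong) (use c' xr r2 in auto)
    then show ?thesis using rh by (simp add: zoneH_def \<theta>_def sum.distrib)
  qed
  (* below the threshold the capacities lie under q_(x-1) < q_x, so min is not capped *)
  have low: "min (capz (dec q x) i) (\<theta> - 1) = min (capz q i) \<theta>" if "i < r - 1" for i
  proof -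
    have "capz q i \<le> capz q (x - 1)"
      using that xr x by (intro cap_monoD[OF mono]) (auto simp: rise_def)
    then show ?thesis using x xr that c' by (auto simp: rise_def \<theta>_def)
  qed
  have high: "min (capz q i) \<theta> \<le> min (capz (dec q x) i) (\<theta> - 1) + 1" for i
    using c' by auto
  have split: "{1..<h} = {1..<r - 1} \<union> {r - 1..<h}" "{1..<r - 1} \<inter> {r - 1..<h} = {}"
    using r2 rh by auto
  have "zoneL q r h = (\<Sum>i\<in>{1..<r - 1}. min (capz q i) \<theta>) + (\<Sum>i\<in>{r - 1..<h}. min (capz q i) \<theta>)"
    unfolding zoneL_def \<theta>_def[symmetric] split(1) by (rule sum.union_disjoint) (use split in auto)
  also have "\<dots> \<le> (\<Sum>i\<in>{1..<r - 1}. min (capz (dec q x) i) (\<theta> - 1))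
                 + (\<Sum>i\<in>{r - 1..<h}. min (capz (dec q x) i) (\<theta> - 1) + 1)"
    using low high by (intro add_mono sum_mono) auto
  also have "\<dots> = zoneL (dec q x) r h + int (h + 1 - r)"
    unfolding zoneL_def threshold split(1) using split r2 rh
    by (simp add: sum.union_disjoint sum.distrib)
  finally show ?thesis using gainH by simp
qed

lemma zones_dec_ge:
  assumes "cap_mono k q" "rise k q x" "1 \<le> r" "r \<le> h" "h \<le> k"
  shows "zoneH q r h + zoneL q r h \<le> zoneH (dec q x) r h + zoneL (dec q x) r h + 1"
proof (cases "x = r - 1")
  case True
  then show ?thesis using zones_dec_at_threshold[OF assms(1,2) True assms(4)] by simp
next
  case False
  then show ?thesis by (rule zones_dec_off_threshold[OF assms(1,2) _ assms(3-5)])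
qed

lemma find_Some_mem: "find P xs = Some y \<Longrightarrow> y \<in> set xs \<and> P y"
  by (induction xs) (auto split: if_splits)

lemma TA_cases:
  "TA k q S = 0 \<or> (1 \<le> TA k q S \<and> TA k q S \<le> k \<and> capz q (TA k q S) \<noteq> capz q (TA k q S - 1))"
proof (cases "find (\<lambda>g. capz q g \<noteq> capz q (g - 1) \<and> (\<exists>h\<in>{g..k}. ta_cond q S g h)) (rev [1..<Suc k])")
  case None
  then show ?thesis by (simp add: TA_def)
next
  case (Some g)
  then have "g \<in> set (rev [1..<Suc k]) \<and> capz q g \<noteq> capz q (g - 1)"
    by (auto dest!: find_Some_mem)
  moreover have "TA k q S = g" unfolding TA_def Some by simp
  ultimately show ?thesis by auto
qed

lemma TA_zero_or_rise:
  assumes "cap_mono k q"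
  shows "TA k q S = 0 \<or> rise k q (TA k q S)"
proof -
  from TA_cases[of k q S] consider "TA k q S = 0"
    | "1 \<le> TA k q S" "TA k q S \<le> k" "capz q (TA k q S) \<noteq> capz q (TA k q S - 1)"
    by meson
  then show ?thesis
  proof cases
    case 2
    have "capz q (TA k q S - 1) \<le> capz q (TA k q S)"
      using 2 by (intro cap_monoD[OF assms]) auto
    with 2 show ?thesis by (simp add: rise_def)
  qed simp
qed

lemma alg_q_Suc:
  "alg_q k m T (Suc s) = dec (alg_q k m T s) (TA k (alg_q k m T s) (\<lambda>i. T (Suc s + i - 1)))"
  unfolding alg_q.simps Let_def dec_def by simp

lemma alg_q_cap_mono:
  assumes sorted: "\<And>a. 1 \<le> a \<Longrightarrow> a < k \<Longrightarrow> m a \<le> m (Suc a)"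
  shows "cap_mono k (alg_q k m T s)"
proof (induction s)
  case 0
  have "capz m a \<le> capz m b" if "a \<le> b" "b \<le> k" for a b
    using that
  proof (induction b rule: dec_induct)
    case (step b)
    have "capz m b \<le> capz m (Suc b)"
      using sorted[of b] step by (cases "b = 0") (auto simp: capz_def)
    then show ?case using step by simp
  qed simp
  then show ?case by (simp add: cap_mono_def)
next
  case (Suc s)
  define x where "x = TA k (alg_q k m T s) (\<lambda>i. T (Suc s + i - 1))"
  have "x = 0 \<or> rise k (alg_q k m T s) x" unfolding x_def by (rule TA_zero_or_rise[OF Suc])
  then consider "x = 0" | "rise k (alg_q k m T s) x" by blast
  then have "cap_mono k (dec (alg_q k m T s) x)"
    using cap_mono_dec[OF Suc] Suc by cases (auto simp: cap_mono_def capz_dec_zero)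
  then show ?case by (simp only: alg_q_Suc x_def)
qed

lemma alg_q_zones_step:
  assumes sorted: "\<And>a. 1 \<le> a \<Longrightarrow> a < k \<Longrightarrow> m a \<le> m (Suc a)"
    and rh: "1 \<le> r" "r \<le> h" "h \<le> k"
  shows "zoneH (alg_q k m T s) r h + zoneL (alg_q k m T s) r h
         \<le> zoneH (alg_q k m T (Suc s)) r h + zoneL (alg_q k m T (Suc s)) r h + 1"
proof -
  define q where "q = alg_q k m T s"
  define x where "x = TA k q (\<lambda>i. T (Suc s + i - 1))"
  have mono: "cap_mono k q" unfolding q_def by (rule alg_q_cap_mono[where k = k and m = m, OF sorted])
  have next_q: "alg_q k m T (Suc s) = dec q x" unfolding q_def x_def by (rule alg_q_Suc)
  have "x = 0 \<or> rise k q x" unfolding x_def by (rule TA_zero_or_rise[OF mono])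
  then consider "x = 0" | "rise k q x" by blast
  then show ?thesis
  proof cases
    case 1
    then show ?thesis unfolding next_q q_def[symmetric]
      using zones_capz_cong[OF capz_dec_zero] by simp
  next
    case 2
    then show ?thesis unfolding next_q q_def[symmetric] by (rule zones_dec_ge[OF mono _ rh])
  qed
qed

theorem lemma4:
  fixes k n :: nat and m :: "nat \<Rightarrow> nat" and T :: "nat \<Rightarrow> real" and H L :: real
    and r h i j :: nat
  assumes sorted: "\<And>a. 1 \<le> a \<Longrightarrow> a < k \<Longrightarrow> m a \<le> m (Suc a)"
    and n_def: "n = (\<Sum>a\<in>{1..k}. m a)"
    and HL: "0 \<le> H" "H < L"
    and T_vals: "\<And>t. 1 \<le> t \<Longrightarrow> t \<le> n \<Longrightarrow> T t \<in> {H, L}"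
    and rh: "1 \<le> r" "r \<le> h" "h \<le> k"
    and ij: "1 \<le> i" "i < j" "j \<le> n"
  shows "zoneH (qcap k m T i) r h + zoneL (qcap k m T i) r h + int i - 1
         \<le> zoneH (qcap k m T j) r h + zoneL (qcap k m T j) r h + int j - 1"
proof -
  define potential where
    "potential s = zoneH (alg_q k m T s) r h + zoneL (alg_q k m T s) r h + int s" for s
  have "potential s \<le> potential (Suc s)" for s
    using alg_q_zones_step[where k = k and m = m and r = r and h = h, OF sorted rh, of T s] by (simp add: potential_def)
  then have "potential (i - 1) \<le> potential (j - 1)"
    by (rule lift_Suc_mono_le) (use ij in simp)
  then show ?thesis using ij unfolding potential_def qcap_def by simp
qed

end
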